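(* If $(\rho,V)$ is an $R[G_n]$-module of $\psi$-Whittaker type, then the restriction map $\mathcal{W}(V,\psi_R)\to\mathrm{Ind}_{N_n}^{P_n}\psi_R$, $W\mapsto W|_{P_n}$, is surjective.
   Context: Let $p$ be a prime, $q$ a power of $p$, $G_n=\mathrm{GL}_n(\mathbb{F}_q)$, $R$ a commutative Noetherian $\mathbb{Z}[\frac1p,\zeta_p]$-algebra with $0\ne1$. $N_n$ is the upper unipotent subgroup and $P_n$ the mirabolic subgroup (matrices with last row $(0,\dots,0,1)$). Fix nontrivial $\psi:(\mathbb{F}_q,+)\to\mathbb{Z}[\frac1p,\zeta_p]^\times$, with image $\psi_R$ in $R^\times$, a character of $N_n$ via $u\mapsto\psi_R(\sum_iu_{i,i+1})$. $\mathrm{Ind}_{N_n}^{H}\psi_R=\{f:H\to R: f(uh)=\psi_R(u)f(h)\}$ for $H=P_n,G_n$. $V$ is of $\psi$-Whittaker type if its $(N_n,\psi_R)$-coinvariants are free of rank one over $R$; a generator $\lambda$ of their $R$-dual gives $V\to\mathrm{Ind}_{N_n}^{G_n}\psi_R$, $v\mapsto(g\mapsto\lambda(\overline{gv}))$, with image the Whittaker model $\mathcal{W}(V,\psi_R)$. *)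

theory Defs
  imports Main "HOL-Number_Theory.Cong" "Jordan_Normal_Form.Matrix"
begin

definition ring_ideal :: "'r::comm_ring_1 set \<Rightarrow> bool" where
  "ring_ideal I \<longleftrightarrow> 0 \<in> I \<and> (\<forall>x\<in>I. \<forall>y\<in>I. x + y \<in> I) \<and> (\<forall>r. \<forall>x\<in>I. r * x \<in> I)"

definition noetherian_ring :: "'r::comm_ring_1 itself \<Rightarrow> bool" where
  "noetherian_ring _ \<longleftrightarrow>
     (\<forall>I :: nat \<Rightarrow> 'r set. (\<forall>k. ring_ideal (I k)) \<and> (\<forall>k. I k \<subseteq> I (Suc k))
        \<longrightarrow> (\<exists>m. \<forall>k\<ge>m. I k = I m))"

definition GL :: "nat \<Rightarrow> 'f::field mat set" where
  "GL n = {A. A \<in> carrier_mat n n \<and> invertible_mat A}"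

definition unip :: "nat \<Rightarrow> 'f::field mat set" where
  "unip n = {A. A \<in> carrier_mat n n \<and> (\<forall>i<n. A $$ (i,i) = 1) \<and>
                 (\<forall>i<n. \<forall>j<n. j < i \<longrightarrow> A $$ (i,j) = 0)}"

definition mirabolic :: "nat \<Rightarrow> 'f::field mat set" where
  "mirabolic n = {A. A \<in> GL n \<and> (\<forall>j<n. A $$ (n - 1, j) = (if j = n - 1 then 1 else 0))}"

definition psiN :: "nat \<Rightarrow> ('f::field \<Rightarrow> 'r) \<Rightarrow> 'f mat \<Rightarrow> 'r" where
  "psiN n \<psi> u = \<psi> (\<Sum>i<n - 1. u $$ (i, i + 1))"

definition is_rep :: "nat \<Rightarrow> ('r::comm_ring_1 \<Rightarrow> 'v::ab_group_add \<Rightarrow> 'v)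
                      \<Rightarrow> ('f::field mat \<Rightarrow> 'v \<Rightarrow> 'v) \<Rightarrow> bool" where
  "is_rep n scale \<rho> \<longleftrightarrow> Modules.module scale \<and>
     (\<forall>g\<in>GL n. Modules.module_hom scale scale (\<rho> g)) \<and>
     (\<forall>g\<in>GL n. \<forall>h\<in>GL n. \<rho> (g * h) = \<rho> g \<circ> \<rho> h) \<and>
     \<rho> (1\<^sub>m n) = id"

definition coinv_kernel :: "nat \<Rightarrow> ('r::comm_ring_1 \<Rightarrow> 'v::ab_group_add \<Rightarrow> 'v)
      \<Rightarrow> ('f::field mat \<Rightarrow> 'v \<Rightarrow> 'v) \<Rightarrow> ('f \<Rightarrow> 'r) \<Rightarrow> 'v set" where
  "coinv_kernel n scale \<rho> \<psi> =
     Modules.module.span scale {\<rho> u v - scale (psiN n \<psi> u) v | u v. u \<in> unip n}"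

definition lin_form :: "('r::comm_ring_1 \<Rightarrow> 'v::ab_group_add \<Rightarrow> 'v) \<Rightarrow> ('v \<Rightarrow> 'r) \<Rightarrow> bool" where
  "lin_form scale f \<longleftrightarrow> Modules.module_hom scale (*) f"

(* psi-Whittaker type: V_{(N,psi)} = V / K is free of rank one, i.e. V/K \<cong> R *)
definition whittaker_type :: "nat \<Rightarrow> ('r::comm_ring_1 \<Rightarrow> 'v::ab_group_add \<Rightarrow> 'v)
      \<Rightarrow> ('f::field mat \<Rightarrow> 'v \<Rightarrow> 'v) \<Rightarrow> ('f \<Rightarrow> 'r) \<Rightarrow> bool" where
  "whittaker_type n scale \<rho> \<psi> \<longleftrightarrow>
     (\<exists>f. lin_form scale f \<and> surj f \<and> (\<forall>v. f v = 0 \<longleftrightarrow> v \<in> coinv_kernel n scale \<rho> \<psi>))"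

(* lam (composed with V \<rightarrow> V_{(N,psi)}) is a generator of the R-dual of the coinvariants:
   Hom_R(V_{(N,psi)},R) is identified with linear forms on V vanishing on the kernel *)
definition dual_generator :: "nat \<Rightarrow> ('r::comm_ring_1 \<Rightarrow> 'v::ab_group_add \<Rightarrow> 'v)
      \<Rightarrow> ('f::field mat \<Rightarrow> 'v \<Rightarrow> 'v) \<Rightarrow> ('f \<Rightarrow> 'r) \<Rightarrow> ('v \<Rightarrow> 'r) \<Rightarrow> bool" where
  "dual_generator n scale \<rho> \<psi> lam \<longleftrightarrow>
     lin_form scale lam \<and> (\<forall>v\<in>coinv_kernel n scale \<rho> \<psi>. lam v = 0) \<and>
     (\<forall>\<mu>. lin_form scale \<mu> \<and> (\<forall>v\<in>coinv_kernel n scale \<rho> \<psi>. \<mu> v = 0)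
          \<longrightarrow> (\<exists>r. \<forall>v. \<mu> v = r * lam v))"

(* Ind_{N_n}^{P_n} psi, functions represented by their values on P_n *)
definition ind_P :: "nat \<Rightarrow> ('f::field \<Rightarrow> 'r::comm_ring_1) \<Rightarrow> ('f mat \<Rightarrow> 'r) set" where
  "ind_P n \<psi> = {f. \<forall>u\<in>unip n. \<forall>p\<in>mirabolic n. f (u * p) = psiN n \<psi> u * f p}"

definition whittaker_fun :: "('f::field mat \<Rightarrow> 'v \<Rightarrow> 'v) \<Rightarrow> ('v \<Rightarrow> 'r) \<Rightarrow> 'v \<Rightarrow> 'f mat \<Rightarrow> 'r" where
  "whittaker_fun \<rho> lam v g = lam (\<rho> g v)"

end

(*
  Let N \<subseteq> P be the upper unipotent and the mirabolic group and \<chi> the character of N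
  induced by \<psi>. Averaging a vector v0 with \<lambda>(v0) = 1 against \<chi>\<inverse> over N gives a
  \<chi>-eigenvector v1, so h(g) = \<lambda>(\<rho>(g) v1) is (N, \<chi>)-equivariant on both sides, with
  h(1) = |N|. Such a function vanishes on P - N. Indeed, let h(g) \<noteq> 0 and let the rows of g
  below row k be unit rows. Left multiplication by N clears row k right of the diagonal without
  changing h(g) \<noteq> 0, and if row k then differed from the unit row at some (k, j), there would be
  u1, u2 \<in> N with u1 g = g u2 but \<chi>(u1) = \<psi>(t0) \<chi>(u2), where \<psi>(t0) - 1 is a non-zero-divisor
  of R. So h is |N| \<chi> on N and 0 elsewhere, and for f in Ind_N^P \<psi> the vector
  \<Sum>_z f(z) \<rho>(z\<inverse>) v1 has Whittaker function |N|^2 f on P. Finally |N| is a power of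
  q = p^k, hence a unit in R.
*)

theory Submission
  imports Defs "Jordan_Normal_Form.Determinant"
begin

section \<open>Nondegenerate additive characters\<close>

locale nondegenerate_additive_char =
  fixes \<psi> :: "'f::field \<Rightarrow> 'r::comm_ring_1"
  assumes add: "\<psi> (x + y) = \<psi> x * \<psi> y"
    and zero: "\<psi> 0 = 1"
    and nondegenerate: "\<exists>t. \<forall>y. (\<psi> t - 1) * y = 0 \<longrightarrow> y = 0"
begin

lemma mult_eq_0_cancel: "\<psi> x * y = 0 \<Longrightarrow> y = 0"
proof -
  assume "\<psi> x * y = 0"
  then have "(\<psi> (- x) * \<psi> x) * y = 0" by (simp add: mult.assoc)
  then show "y = 0" by (simp flip: add add: zero)
qed

lemma ex_nondegenerate_shift: "\<exists>t. \<forall>s y. \<psi> (s + t) * y = \<psi> s * y \<longrightarrow> y = 0"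
proof -
  obtain t where t: "\<And>y. (\<psi> t - 1) * y = 0 \<Longrightarrow> y = 0" using nondegenerate by blast
  have "y = 0" if "\<psi> (s + t) * y = \<psi> s * y" for s y
  proof -
    have "\<psi> s * ((\<psi> t - 1) * y) = 0" using that by (simp add: add algebra_simps)
    then show ?thesis by (rule t[OF mult_eq_0_cancel])
  qed
  then show ?thesis by blast
qed

end

lemma power_mult_eq_self:
  fixes a y :: "'a::monoid_mult"
  assumes "a * y = y"
  shows "a ^ i * y = y"
  by (induction i) (simp_all add: mult.assoc assms)

lemma power_eq_if_cong:
  fixes \<zeta> :: "'a::monoid_mult"
  assumes "\<zeta> ^ p = 1" and "[a = b] (mod p)"
  shows "\<zeta> ^ a = \<zeta> ^ b"
proof -
  have "\<zeta> ^ m = \<zeta> ^ (m mod p)" for m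
  proof -
    have "\<zeta> ^ m = (\<zeta> ^ p) ^ (m div p) * \<zeta> ^ (m mod p)"
      by (simp flip: power_mult power_add)
    then show ?thesis using assms(1) by simp
  qed
  from this[of a] this[of b] show ?thesis using assms(2) unfolding cong_def by simp
qed

lemma nondegenerate_additive_char_power:
  fixes \<zeta> :: "'r::comm_ring_1" and c :: "'f::field \<Rightarrow> nat"
  assumes "prime p"
    and p_unit: "\<exists>t::'r. of_nat p * t = 1"
    and cyclotomic: "(\<Sum>i<p. \<zeta> ^ i) = 0"
    and c_add: "\<And>x y. [c (x + y) = c x + c y] (mod p)"
    and c_nontriv: "\<exists>x. \<not> p dvd c x"
  shows "nondegenerate_additive_char (\<lambda>x. \<zeta> ^ c x)"
proof
  have "\<zeta> ^ p = 1" using power_diff_1_eq[of \<zeta> p] cyclotomic by simp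
  note power_eq = power_eq_if_cong[OF this]
  show "\<zeta> ^ c (x + y) = \<zeta> ^ c x * \<zeta> ^ c y" for x y
    using power_eq[OF c_add[of x y]] by (simp add: power_add)
  have "[c 0 + 0 = c 0 + c 0] (mod p)" using c_add[of 0 0] by simp
  then have "[0 = c 0] (mod p)" using cong_add_lcancel_nat by blast
  then show "\<zeta> ^ c 0 = 1" using power_eq by force
  obtain x where "\<not> p dvd c x" using c_nontriv by blast
  then have "coprime (c x) p" using \<open>prime p\<close> by (simp add: prime_imp_coprime coprime_commute)
  then obtain i where i: "[c x * i = 1] (mod p)" using cong_solve_coprime_nat by auto
  obtain t where t: "of_nat p * t = (1::'r)" using p_unit by blast
  show "\<exists>x. \<forall>y. (\<zeta> ^ c x - 1) * y = 0 \<longrightarrow> y = 0"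
  proof (intro exI allI impI)
    fix y assume "(\<zeta> ^ c x - 1) * y = 0"
    then have "\<zeta> ^ c x * y = y" by (simp add: algebra_simps)
    then have "(\<zeta> ^ c x) ^ i * y = y" by (rule power_mult_eq_self)
    then have "\<zeta> * y = y" using power_eq[OF i] by (simp flip: power_mult)
    then have "\<zeta> ^ j * y = y" for j by (rule power_mult_eq_self)
    then have "of_nat p * y = (\<Sum>j<p. \<zeta> ^ j) * y" by (simp add: sum_distrib_right)
    then have "of_nat p * y = 0" using cyclotomic by simp
    have "y = (of_nat p * t) * y" using t by simp
    also have "\<dots> = t * (of_nat p * y)" by (simp only: ac_simps)
    also have "\<dots> = 0" using \<open>of_nat p * y = 0\<close> by simp
    finally show "y = 0" .
  qed
qed

section \<open>Finite fields have prime power order\<close>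

definition add_closed :: "'a::monoid_add set \<Rightarrow> bool" where
  "add_closed A \<longleftrightarrow> 0 \<in> A \<and> (\<forall>x\<in>A. \<forall>y\<in>A. x + y \<in> A)"

lemma add_closed_of_nat_mult:
  assumes "add_closed A" and "y \<in> A"
  shows "(of_nat e :: 'a::semiring_1) * y \<in> A"
  using assms by (induction e) (auto simp: add_closed_def distrib_right)

lemma add_closed_diff:
  fixes A :: "'a::ring_1 set"
  assumes "add_closed A" and "of_nat p = (0::'a)" and "p > 0" and "a \<in> A" and "b \<in> A"
  shows "b - a \<in> A"
proof -
  have "b - a = b + of_nat (p - 1) * a" using assms(2,3) by (simp add: of_nat_diff)
  moreover have "b + of_nat (p - 1) * a \<in> A"
    using assms(1,5) add_closed_of_nat_mult[OF assms(1,4)] unfolding add_closed_def by blast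
  ultimately show ?thesis by (simp only:)
qed

lemma add_closed_extend:
  fixes A :: "'f::field set"
  assumes A: "add_closed A" and x: "x \<notin> A" and "prime p" and char: "of_nat p = (0::'f)"
  defines "A' \<equiv> (\<lambda>(a, j). a + of_nat j * x) ` (A \<times> {..<p})"
  shows "add_closed A'" and "card A' = card A * p"
proof -
  have "p > 0" using \<open>prime p\<close> prime_gt_0_nat by blast
  have of_nat_mod: "(of_nat (m mod p) :: 'f) = of_nat m" for m
  proof -
    have "(of_nat m :: 'f) = of_nat (m mod p + p * (m div p))" by simp
    also have "\<dots> = of_nat (m mod p)"
      by (simp only: of_nat_add of_nat_mult char mult_zero_left add_0_right)
    finally show ?thesis by simp
  qed
  show "add_closed A'"
    unfolding add_closed_def
  proof (intro conjI ballI)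
    show "0 \<in> A'" unfolding A'_def
      using A \<open>p > 0\<close> by (intro image_eqI[where x = "(0, 0)"]) (auto simp: add_closed_def)
    fix y z assume "y \<in> A'" "z \<in> A'"
    then obtain a j b i where "y = a + of_nat j * x" "z = b + of_nat i * x" "a \<in> A" "b \<in> A"
      unfolding A'_def by auto
    then have "y + z = (a + b) + of_nat ((j + i) mod p) * x" and "a + b \<in> A"
      using A by (simp_all add: of_nat_mod algebra_simps add_closed_def)
    then show "y + z \<in> A'" unfolding A'_def using \<open>p > 0\<close>
      by (intro image_eqI[where x = "(a + b, (j + i) mod p)"]) auto
  qed
  have no_collision: False
    if "a \<in> A" "b \<in> A" "i < j" "j < p" "a + of_nat j * x = b + of_nat i * x" for a b i j
  proof -
    have "of_nat (j - i) * x = b - a" using that by (simp add: of_nat_diff algebra_simps)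
    then have diff: "of_nat (j - i) * x \<in> A" using add_closed_diff[OF A char \<open>p > 0\<close>] that by simp
    have "coprime (j - i) p"
      using \<open>prime p\<close> that by (intro prime_imp_coprime_nat[THEN coprime_commute[THEN iffD1]])
        (auto dest: dvd_imp_le)
    then obtain e where e: "[(j - i) * e = 1] (mod p)" using cong_solve_coprime_nat by auto
    have "x = of_nat (((j - i) * e) mod p) * x"
      using e prime_gt_1_nat[OF \<open>prime p\<close>] by (simp add: cong_def)
    also have "\<dots> = of_nat e * (of_nat (j - i) * x)" by (simp only: of_nat_mod of_nat_mult ac_simps)
    finally have x_eq: "x = of_nat e * (of_nat (j - i) * x)" .
    have "x \<in> A" by (subst x_eq) (rule add_closed_of_nat_mult[OF A diff])
    with x show False by contradiction
  qed
  have "inj_on (\<lambda>(a, j). a + of_nat j * x) (A \<times> {..<p})"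
  proof (rule inj_onI, clarify)
    fix a j b i assume "a \<in> A" "j < p" "b \<in> A" "i < p" "a + of_nat j * x = b + of_nat i * x"
    then show "a = b \<and> j = i"
      using no_collision[of a b i j] no_collision[of b a j i] by (cases i j rule: linorder_cases) auto
  qed
  then show "card A' = card A * p" unfolding A'_def by (simp add: card_image card_cartesian_product)
qed

lemma card_UNIV_prime_power:
  assumes "prime p" and char: "of_nat p = (0::'f::{finite,field})"
  shows "\<exists>k. card (UNIV :: 'f set) = p ^ k"
proof -
  have step: "\<exists>k. card (UNIV :: 'f set) = p ^ k" if "add_closed A" "card A = p ^ k" for A :: "'f set" and k
    using that
  proof (induction "card (UNIV :: 'f set) - card A" arbitrary: A k rule: less_induct)
    case less
    show ?case
    proof (cases "A = UNIV")
      case True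
      then show ?thesis using less.prems by auto
    next
      case False
      then obtain x where "x \<notin> A" by blast
      let ?A' = "(\<lambda>(a, j). a + of_nat j * x) ` (A \<times> {..<p})"
      have A': "add_closed ?A'" "card ?A' = card A * p"
        using add_closed_extend[OF less.prems(1) \<open>x \<notin> A\<close> assms] by auto
      have "card A < card ?A'"
        using A'(2) less.prems(1) prime_gt_1_nat[OF \<open>prime p\<close>]
        by (auto simp: add_closed_def card_gt_0_iff)
      moreover have "card ?A' \<le> card (UNIV :: 'f set)" by (rule card_mono) auto
      ultimately have "card (UNIV :: 'f set) - card ?A' < card (UNIV :: 'f set) - card A" by linarith
      then show ?thesis using A' less.prems(2) by (intro less.hyps[of ?A' "Suc k"]) auto
    qed
  qed
  show ?thesis using step[of "{0}" 0] by (simp add: add_closed_def)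
qed

section \<open>The mirabolic and the upper unipotent group\<close>

lemma GL_eq_Units: "GL n = Units (ring_mat TYPE('f::field) n b)"
proof (rule Set.set_eqI, rule iffI)
  fix A :: "'f mat"
  assume "A \<in> GL n"
  then obtain B where A: "A \<in> carrier_mat n n" and AB: "A * B = 1\<^sub>m n"
    and BA: "B * A = 1\<^sub>m (dim_row B)"
    unfolding GL_def invertible_mat_def inverts_mat_def by auto
  have "B \<in> carrier_mat n n"
    using arg_cong[OF AB, of dim_col] arg_cong[OF BA, of dim_col] A by auto
  with A AB BA show "A \<in> Units (ring_mat TYPE('f) n b)"
    unfolding Units_def ring_mat_def by auto
next
  fix A :: "'f mat"
  assume "A \<in> Units (ring_mat TYPE('f) n b)"
  then show "A \<in> GL n"
    unfolding Units_def ring_mat_def GL_def invertible_mat_def inverts_mat_def by auto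
qed

definition GL_group :: "nat \<Rightarrow> 'f::field mat monoid" where
  "GL_group n = units_of (ring_mat TYPE('f) n ())"

lemma GL_group_simps [simp]:
  "carrier (GL_group n) = GL n"
  "x \<otimes>\<^bsub>GL_group n\<^esub> y = x * y"
  "\<one>\<^bsub>GL_group n\<^esub> = 1\<^sub>m n"
  by (simp_all add: GL_group_def units_of_def GL_eq_Units[of n "()"]) (simp_all add: ring_mat_def)

lemma group_GL_group: "group (GL_group n)"
  unfolding GL_group_def by (rule monoid.units_group) (rule ring.is_monoid[OF ring_mat])

lemma GL_carrier: "g \<in> GL n \<Longrightarrow> g \<in> carrier_mat n n"
  by (simp add: GL_def)

lemma index_mult_square:
  assumes "A \<in> carrier_mat n n" and "B \<in> carrier_mat n n" and "i < n" and "j < n"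
  shows "(A * B) $$ (i, j) = (\<Sum>l<n. A $$ (i, l) * B $$ (l, j))"
  using assms by (simp add: scalar_prod_def atLeast0LessThan)

lemma mirabolic_GL: "g \<in> mirabolic n \<Longrightarrow> g \<in> GL n"
  by (simp add: mirabolic_def)

lemma mirabolic_last_row_mult:
  assumes "g \<in> mirabolic n" and "h \<in> carrier_mat n n" and "j < n"
  shows "(g * h) $$ (n - 1, j) = h $$ (n - 1, j)"
proof -
  have "g \<in> carrier_mat n n" "n - 1 < n" using assms by (auto simp: mirabolic_def GL_def)
  then have "(g * h) $$ (n - 1, j) = (\<Sum>l<n. g $$ (n - 1, l) * h $$ (l, j))"
    using assms(2,3) by (intro index_mult_square)
  also have "\<dots> = (\<Sum>l<n. if l = n - 1 then h $$ (l, j) else 0)"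
    using assms(1) by (intro sum.cong) (auto simp: mirabolic_def)
  also have "\<dots> = h $$ (n - 1, j)" using \<open>n - 1 < n\<close> by simp
  finally show ?thesis .
qed

lemma one_mirabolic: "1\<^sub>m n \<in> (mirabolic n :: 'f::field mat set)"
proof -
  have "(1\<^sub>m n :: 'f mat) \<in> GL n"
    unfolding GL_def invertible_mat_def inverts_mat_def by (auto intro!: exI[of _ "1\<^sub>m n"])
  then show ?thesis by (auto simp: mirabolic_def)
qed

lemma subgroup_mirabolic: "subgroup (mirabolic n) (GL_group n :: 'f::field mat monoid)"
proof -
  interpret GL: group "GL_group n :: 'f mat monoid" by (rule group_GL_group)
  show ?thesis
  proof (rule GL.subgroupI)
    show "mirabolic n \<subseteq> carrier (GL_group n :: 'f mat monoid)" by (auto simp: mirabolic_def)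
    show "(mirabolic n :: 'f mat set) \<noteq> {}" using one_mirabolic by blast
  next
    fix g :: "'f mat" assume g: "g \<in> mirabolic n"
    let ?h = "inv\<^bsub>GL_group n\<^esub> g"
    have "?h \<in> GL n" "g * ?h = 1\<^sub>m n"
      using g GL.inv_closed[of g] GL.r_inv[of g] by (auto simp: mirabolic_def)
    then show "?h \<in> mirabolic n"
      unfolding mirabolic_def
    proof (intro CollectI conjI allI impI)
      fix j assume "j < n"
      have "?h $$ (n - 1, j) = (g * ?h) $$ (n - 1, j)"
        using mirabolic_last_row_mult[OF g GL_carrier[OF \<open>?h \<in> GL n\<close>] \<open>j < n\<close>] by simp
      also have "\<dots> = (if j = n - 1 then 1 else 0)" using \<open>g * ?h = 1\<^sub>m n\<close> \<open>j < n\<close> by simp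
      finally show "?h $$ (n - 1, j) = (if j = n - 1 then 1 else 0)" .
    qed
  next
    fix g h :: "'f mat" assume g: "g \<in> mirabolic n" and h: "h \<in> mirabolic n"
    then have "g * h \<in> GL n" using GL.m_closed[of g h] by (simp add: mirabolic_def)
    moreover have "(g * h) $$ (n - 1, j) = h $$ (n - 1, j)" if "j < n" for j
      using mirabolic_last_row_mult[OF g GL_carrier[OF mirabolic_GL[OF h]] that] .
    ultimately show "g \<otimes>\<^bsub>GL_group n\<^esub> h \<in> mirabolic n"
      using h by (simp add: mirabolic_def)
  qed
qed

definition mirabolic_group :: "nat \<Rightarrow> 'f::field mat monoid" where
  "mirabolic_group n = (GL_group n)\<lparr>carrier := mirabolic n\<rparr>"

lemma mirabolic_group_simps [simp]:
  "carrier (mirabolic_group n) = mirabolic n"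
  "x \<otimes>\<^bsub>mirabolic_group n\<^esub> y = x * y"
  "\<one>\<^bsub>mirabolic_group n\<^esub> = 1\<^sub>m n"
  by (simp_all add: mirabolic_group_def)

lemma group_mirabolic_group: "group (mirabolic_group n)"
  unfolding mirabolic_group_def
  by (rule group.subgroup_imp_group[OF group_GL_group subgroup_mirabolic])

lemma mirabolic_mult: "g \<in> mirabolic n \<Longrightarrow> h \<in> mirabolic n \<Longrightarrow> g * h \<in> mirabolic n"
  using group.subgroupE(4)[OF group_GL_group subgroup_mirabolic] by simp

lemma unip_iff:
  "u \<in> unip n \<longleftrightarrow>
     u \<in> carrier_mat n n \<and> (\<forall>i<n. \<forall>j<n. j \<le> i \<longrightarrow> u $$ (i, j) = (if i = j then 1 else 0))"
  unfolding unip_def by (auto simp: le_less)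

lemma unip_carrier: "u \<in> unip n \<Longrightarrow> u \<in> carrier_mat n n"
  by (simp add: unip_def)

lemma unip_mult:
  assumes u: "u \<in> unip n" and w: "w \<in> unip n"
  shows "u * w \<in> unip n"
proof -
  have "(u * w) $$ (i, j) = (if i = j then 1 else 0)" if "i < n" "j < n" "j \<le> i" for i j
  proof -
    have "(u * w) $$ (i, j) = (\<Sum>l<n. u $$ (i, l) * w $$ (l, j))"
      using u w that by (intro index_mult_square) (auto simp: unip_def)
    also have "\<dots> = (\<Sum>l\<in>{i}. u $$ (i, l) * w $$ (l, j))"
    proof (rule sum.mono_neutral_right)
      show "\<forall>l\<in>{..<n} - {i}. u $$ (i, l) * w $$ (l, j) = 0"
      proof
        fix l assume "l \<in> {..<n} - {i}"
        then consider "l < i" | "i < l" "l < n" by (auto simp: neq_iff)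
        then show "u $$ (i, l) * w $$ (l, j) = 0"
          using u w that by cases (simp_all add: unip_def)
      qed
    qed (use that in auto)
    also have "\<dots> = (if i = j then 1 else 0)"
      using u w that by (simp add: unip_iff)
    finally show ?thesis .
  qed
  moreover have "u \<in> carrier_mat n n" "w \<in> carrier_mat n n" using u w by (simp_all add: unip_def)
  then have "u * w \<in> carrier_mat n n" by (rule mult_carrier_mat)
  ultimately show ?thesis by (simp add: unip_iff)
qed

lemma unip_mult_superdiag:
  assumes u: "u \<in> unip n" and w: "w \<in> unip n" and "Suc i < n"
  shows "(u * w) $$ (i, Suc i) = u $$ (i, Suc i) + w $$ (i, Suc i)"
proof -
  have "(u * w) $$ (i, Suc i) = (\<Sum>l<n. u $$ (i, l) * w $$ (l, Suc i))"
    using u w assms(3) by (intro index_mult_square) (auto simp: unip_def)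
  also have "\<dots> = (\<Sum>l\<in>{i, Suc i}. u $$ (i, l) * w $$ (l, Suc i))"
  proof (rule sum.mono_neutral_right)
    show "\<forall>l\<in>{..<n} - {i, Suc i}. u $$ (i, l) * w $$ (l, Suc i) = 0"
    proof
      fix l assume "l \<in> {..<n} - {i, Suc i}"
      then consider "l < i" | "Suc i < l" "l < n" by (auto simp: neq_iff)
      then show "u $$ (i, l) * w $$ (l, Suc i) = 0"
        using u w assms(3) by cases (simp_all add: unip_def)
    qed
  qed (use assms(3) in auto)
  also have "\<dots> = u $$ (i, Suc i) + w $$ (i, Suc i)"
    using u w assms(3) by (simp add: unip_iff)
  finally show ?thesis .
qed

lemma unip_subset_mirabolic: "unip n \<subseteq> mirabolic (n :: nat)"
proof
  fix u :: "'f::field mat" assume u: "u \<in> unip n"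
  then have uc: "u \<in> carrier_mat n n" and "upper_triangular u"
    by (auto simp: unip_def)
  then have "det u = prod_list (diag_mat u)" by (intro det_upper_triangular)
  also have "diag_mat u = replicate n 1"
    using u by (intro nth_equalityI) (auto simp: diag_mat_def unip_def)
  finally have "u \<in> GL n" using det_non_zero_imp_unit[OF uc] by (simp add: GL_eq_Units[of n "()"])
  then show "u \<in> mirabolic n" using u by (auto simp: mirabolic_def unip_iff)
qed

lemma (in group) finite_submonoid_is_subgroup:
  assumes "finite H" and "H \<subseteq> carrier G" and "\<one> \<in> H"
    and mult: "\<And>x y. x \<in> H \<Longrightarrow> y \<in> H \<Longrightarrow> x \<otimes> y \<in> H"
  shows "subgroup H G"
proof (rule subgroupI)
  fix x assume x: "x \<in> H"
  have "inj_on (\<lambda>y. x \<otimes> y) H"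
    using inj_on_cmult[of x] x assms(2) by (auto intro: inj_on_subset)
  moreover have "(\<lambda>y. x \<otimes> y) ` H \<subseteq> H" using mult x by auto
  ultimately have "(\<lambda>y. x \<otimes> y) ` H = H" using assms(1) by (simp add: endo_inj_surj)
  then obtain y where "y \<in> H" "x \<otimes> y = \<one>" using assms(3) by (metis imageE)
  moreover have "inv x = y"
    using calculation x assms(2) inv_solve_left'[of y x \<one>] by auto
  ultimately show "inv x \<in> H" by simp
qed (use assms in auto)

lemma finite_carrier_mat: "finite (carrier_mat n m :: 'a::finite mat set)"
proof -
  let ?S = "{..<n} \<times> {..<m}"
  have "(carrier_mat n m :: 'a mat set) \<subseteq> mat n m ` PiE ?S (\<lambda>_. UNIV)"
  proof
    fix A :: "'a mat" assume "A \<in> carrier_mat n m"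
    then have "A = mat n m (restrict (($$) A) ?S)" by auto
    moreover have "restrict (($$) A) ?S \<in> PiE ?S (\<lambda>_. UNIV)" by simp
    ultimately show "A \<in> mat n m ` PiE ?S (\<lambda>_. UNIV)" by blast
  qed
  then show ?thesis by (rule finite_subset) (simp add: finite_PiE)
qed

lemma finite_mirabolic: "finite (mirabolic n :: 'f::{finite,field} mat set)"
  by (rule finite_subset[OF _ finite_carrier_mat]) (auto simp: mirabolic_def GL_def)

lemma subgroup_unip: "subgroup (unip n) (mirabolic_group n :: 'f::{finite,field} mat monoid)"
proof (rule group.finite_submonoid_is_subgroup[OF group_mirabolic_group])
  show "finite (unip n :: 'f mat set)"
    using finite_subset[OF unip_subset_mirabolic finite_mirabolic] .
  show "unip n \<subseteq> carrier (mirabolic_group n :: 'f mat monoid)"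
    using unip_subset_mirabolic by simp
  show "\<one>\<^bsub>mirabolic_group n\<^esub> \<in> (unip n :: 'f mat set)" by (simp add: unip_def)
  show "x \<otimes>\<^bsub>mirabolic_group n\<^esub> y \<in> unip n" if "x \<in> unip n" "y \<in> unip n" for x y :: "'f mat"
    using that by (simp add: unip_mult)
qed

lemma card_unip:
  "card (unip n :: 'f::{finite,field} mat set) = card (UNIV :: 'f set) ^ card {(i, j). i < j \<and> j < n}"
proof -
  let ?S = "{(i, j). i < j \<and> j < n}"
  define mk :: "(nat \<times> nat \<Rightarrow> 'f) \<Rightarrow> 'f mat" where
    "mk \<phi> = mat n n (\<lambda>(i, j). if i = j then 1 else if i < j then \<phi> (i, j) else 0)" for \<phi>
  have "finite ?S" by (rule finite_subset[of _ "{..<n} \<times> {..<n}"]) auto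
  have "unip n = mk ` PiE ?S (\<lambda>_. UNIV)"
  proof
    show "unip n \<subseteq> mk ` PiE ?S (\<lambda>_. UNIV)"
    proof
      fix u :: "'f mat" assume u: "u \<in> unip n"
      then have "u = mk (restrict (($$) u) ?S)"
        by (intro eq_matI) (auto simp: mk_def unip_def not_less_iff_gr_or_eq)
      moreover have "restrict (($$) u) ?S \<in> PiE ?S (\<lambda>_. UNIV)" by simp
      ultimately show "u \<in> mk ` PiE ?S (\<lambda>_. UNIV)" by blast
    qed
    show "mk ` PiE ?S (\<lambda>_. UNIV) \<subseteq> unip n" by (auto simp: mk_def unip_def)
  qed
  moreover have "inj_on mk (PiE ?S (\<lambda>_. UNIV))"
  proof (rule inj_onI)
    fix \<phi> \<chi> assume "\<phi> \<in> PiE ?S (\<lambda>_. UNIV)" "\<chi> \<in> PiE ?S (\<lambda>_. UNIV)" and eq: "mk \<phi> = mk \<chi>"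
    from \<open>\<phi> \<in> _\<close> \<open>\<chi> \<in> _\<close> show "\<phi> = \<chi>"
    proof (rule PiE_ext)
      fix ij assume "ij \<in> ?S"
      then show "\<phi> ij = \<chi> ij"
        using arg_cong[OF eq, of "\<lambda>A. A $$ ij"] by (auto simp: mk_def)
    qed
  qed
  ultimately show ?thesis using \<open>finite ?S\<close> by (simp add: card_image card_PiE)
qed

lemma card_unip_invertible:
  assumes "prime p" and "of_nat p = (0::'f::{finite,field})" and "\<exists>t. of_nat p * t = (1::'r::comm_ring_1)"
  shows "\<exists>s. of_nat (card (unip n :: 'f mat set)) * s = (1::'r)"
proof -
  obtain k where k: "card (UNIV :: 'f set) = p ^ k" using card_UNIV_prime_power assms(1,2) by blast
  obtain t where t: "of_nat p * t = (1::'r)" using assms(3) by blast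
  let ?m = "card {(i, j). i < j \<and> j < n}"
  have "of_nat (card (unip n :: 'f mat set)) * t ^ (k * ?m) = (of_nat p * t :: 'r) ^ (k * ?m)"
    by (simp add: card_unip k power_mult_distrib flip: power_mult)
  then show ?thesis using t by auto
qed

section \<open>Bi-equivariant functions on the mirabolic group are supported on the unipotent group\<close>

definition id_plus_outer :: "nat \<Rightarrow> (nat \<Rightarrow> 'a) \<Rightarrow> (nat \<Rightarrow> 'a) \<Rightarrow> 'a::comm_ring_1 mat" where
  "id_plus_outer n x y = mat n n (\<lambda>(i, j). (if i = j then 1 else 0) + x i * y j)"

lemma id_plus_outer_mult:
  assumes "A \<in> carrier_mat n n" and "i < n" and "j < n"
  shows "(id_plus_outer n x y * A) $$ (i, j) = A $$ (i, j) + x i * (\<Sum>l<n. y l * A $$ (l, j))"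
  using assms
  by (simp add: id_plus_outer_def scalar_prod_def distrib_right sum.distrib sum_distrib_left
      mult.assoc atLeast0LessThan if_distrib[where f = "\<lambda>z. z * _"] cong: if_cong)

lemma mult_id_plus_outer:
  assumes "A \<in> carrier_mat n n" and "i < n" and "j < n"
  shows "(A * id_plus_outer n x y) $$ (i, j) = A $$ (i, j) + (\<Sum>l<n. A $$ (i, l) * x l) * y j"
  using assms
  by (simp add: id_plus_outer_def scalar_prod_def distrib_left sum.distrib sum_distrib_right
      mult.assoc atLeast0LessThan if_distrib[where f = "\<lambda>z. _ * z"] cong: if_cong)

lemma id_plus_outer_unip:
  assumes "\<And>i j. i < n \<Longrightarrow> j < n \<Longrightarrow> j \<le> i \<Longrightarrow> x i * y j = 0"
  shows "id_plus_outer n x y \<in> (unip n :: 'f::field mat set)"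
  using assms by (simp add: unip_iff id_plus_outer_def)

lemma psiN_id_plus_outer_unit:
  assumes "Suc k < n"
  shows "psiN n \<psi> (id_plus_outer n x (\<lambda>j. if j = Suc k then 1 else 0)) = \<psi> (x k)"
proof -
  have "(\<Sum>i<n - 1. id_plus_outer n x (\<lambda>j. if j = Suc k then 1 else 0) $$ (i, i + 1))
      = (\<Sum>i<n - 1. if i = k then x k else 0)"
    by (rule sum.cong) (auto simp: id_plus_outer_def)
  moreover have "k < n - 1" using assms by simp
  ultimately show ?thesis by (simp add: psiN_def)
qed

definition identity_rows_from :: "nat \<Rightarrow> nat \<Rightarrow> 'a::{zero,one} mat \<Rightarrow> bool" where
  "identity_rows_from n k g \<longleftrightarrow> (\<forall>i<n. \<forall>j<n. k \<le> i \<longrightarrow> g $$ (i, j) = (if i = j then 1 else 0))"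

lemma clear_row_right_of_diagonal:
  fixes g :: "'f::field mat"
  assumes g: "g \<in> carrier_mat n n" and rows: "identity_rows_from n (Suc k) g"
  obtains u where "u \<in> unip n"
    and "\<And>i j. i < n \<Longrightarrow> j < n \<Longrightarrow> (u * g) $$ (i, j) = (if i = k \<and> k < j then 0 else g $$ (i, j))"
proof -
  define y where "y l = (if k < l then - g $$ (k, l) else 0)" for l
  let ?u = "id_plus_outer n (\<lambda>i. if i = k then 1 else 0) y"
  have "?u \<in> unip n" by (rule id_plus_outer_unip) (auto simp: y_def)
  moreover have "(?u * g) $$ (i, j) = (if i = k \<and> k < j then 0 else g $$ (i, j))"
    if "i < n" "j < n" for i j
  proof -
    have "(\<Sum>l<n. y l * g $$ (l, j)) = (\<Sum>l<n. if l = j then (if k < j then - g $$ (k, j) else 0) else 0)"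
      using rows \<open>j < n\<close> by (intro sum.cong) (auto simp: y_def identity_rows_from_def)
    then show ?thesis using g that by (simp add: id_plus_outer_mult)
  qed
  ultimately show thesis by (rule that)
qed

context nondegenerate_additive_char
begin

lemma psiN_mult:
  assumes "u \<in> unip n" and "w \<in> unip n"
  shows "psiN n \<psi> (u * w) = psiN n \<psi> u * psiN n \<psi> w"
proof -
  have "(\<Sum>i<n - 1. (u * w) $$ (i, i + 1)) = (\<Sum>i<n - 1. u $$ (i, i + 1) + w $$ (i, i + 1))"
    using unip_mult_superdiag[OF assms] by (intro sum.cong) auto
  then show ?thesis by (simp add: psiN_def sum.distrib add)
qed

lemma psiN_one: "psiN n \<psi> (1\<^sub>m n) = 1"
  by (simp add: psiN_def zero)

definition unip_biequivariant :: "nat \<Rightarrow> ('f mat \<Rightarrow> 'r) \<Rightarrow> bool" where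
  "unip_biequivariant n h \<longleftrightarrow> (\<forall>u\<in>unip n. \<forall>g\<in>mirabolic n.
     h (u * g) = psiN n \<psi> u * h g \<and> h (g * u) = h g * psiN n \<psi> u)"

lemma unip_biequivariant_row_lower_part:
  assumes h: "unip_biequivariant n h" and g: "g \<in> mirabolic n" and "h g \<noteq> 0"
    and rows: "identity_rows_from n (Suc k) g" and "Suc k < n"
    and "j \<le> k"
  shows "g $$ (k, j) = (if k = j then 1 else 0)"
proof (rule ccontr)
  obtain t0 where t0: "\<And>s y. \<psi> (s + t0) * y = \<psi> s * y \<Longrightarrow> y = 0"
    using ex_nondegenerate_shift by blast
  define \<delta> where "\<delta> = (if k = j then 1 else (0::'f))"
  assume "g $$ (k, j) \<noteq> (if k = j then 1 else 0)"
  then have "g $$ (k, j) - \<delta> \<noteq> 0" by (simp add: \<delta>_def)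
  define t where "t = t0 / (g $$ (k, j) - \<delta>)"
  have t: "t * g $$ (k, j) = t * \<delta> + t0"
    using \<open>g $$ (k, j) - \<delta> \<noteq> 0\<close> by (simp add: t_def field_simps)
  (* Row k+1 of g is the unit row, so u1 = 1 + t (g e_j) e_(k+1)^T and u2 = 1 + t e_j e_(k+1)^T
     satisfy u1 g = g u2, whereas \<chi>(u1) = \<psi>(t0) \<chi>(u2). *)
  define e where "e = (\<lambda>l. if l = Suc k then 1 else (0::'f))"
  define u1 where "u1 = id_plus_outer n (\<lambda>a. t * g $$ (a, j)) e"
  define u2 where "u2 = id_plus_outer n (\<lambda>a. if a = j then t else 0) e"
  have gc: "g \<in> carrier_mat n n" using g by (simp add: mirabolic_def GL_def)
  have u1: "u1 \<in> unip n"
    unfolding u1_def by (rule id_plus_outer_unip)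
      (use rows \<open>j \<le> k\<close> in \<open>auto simp: e_def identity_rows_from_def\<close>)
  have u2: "u2 \<in> unip n"
    unfolding u2_def by (rule id_plus_outer_unip) (use \<open>j \<le> k\<close> in \<open>auto simp: e_def\<close>)
  have comm: "u1 * g = g * u2"
  proof (rule eq_matI)
    fix a b assume "a < dim_row (g * u2)" "b < dim_col (g * u2)"
    then have ab: "a < n" "b < n" using gc by (auto simp: u2_def id_plus_outer_def)
    have "(\<Sum>l<n. e l * g $$ (l, b)) = g $$ (Suc k, b)"
      using \<open>Suc k < n\<close> by (simp add: e_def if_distrib[where f = "\<lambda>z. z * _"] cong: if_cong)
    also have "\<dots> = e b" using rows \<open>Suc k < n\<close> \<open>b < n\<close> by (simp add: e_def identity_rows_from_def)
    finally have "(\<Sum>l<n. e l * g $$ (l, b)) = e b" .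
    moreover have "(\<Sum>l<n. g $$ (a, l) * (if l = j then t else 0)) = g $$ (a, j) * t"
      using \<open>j \<le> k\<close> \<open>Suc k < n\<close> by (simp add: if_distrib[where f = "\<lambda>z. _ * z"] cong: if_cong)
    ultimately show "(u1 * g) $$ (a, b) = (g * u2) $$ (a, b)"
      using gc ab by (simp add: u1_def u2_def id_plus_outer_mult mult_id_plus_outer)
  qed (use gc in \<open>auto simp: u1_def u2_def id_plus_outer_def\<close>)
  have "psiN n \<psi> u1 = \<psi> (t * g $$ (k, j))"
    unfolding u1_def e_def by (rule psiN_id_plus_outer_unit[OF \<open>Suc k < n\<close>])
  then have chi1: "psiN n \<psi> u1 = \<psi> (t * \<delta> + t0)" using t by simp
  have "psiN n \<psi> u2 = \<psi> (if k = j then t else 0)"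
    unfolding u2_def e_def by (rule psiN_id_plus_outer_unit[OF \<open>Suc k < n\<close>])
  then have chi2: "psiN n \<psi> u2 = \<psi> (t * \<delta>)" by (simp add: \<delta>_def)
  have "h (u1 * g) = psiN n \<psi> u1 * h g" "h (g * u2) = h g * psiN n \<psi> u2"
    using h u1 u2 g by (simp_all add: unip_biequivariant_def)
  then have "\<psi> (t * \<delta> + t0) * h g = \<psi> (t * \<delta>) * h g"
    using comm chi1 chi2 by (simp add: mult.commute)
  then show False using t0 \<open>h g \<noteq> 0\<close> by blast
qed

lemma unip_biequivariant_reduce_row:
  assumes h: "unip_biequivariant n h" and g: "g \<in> mirabolic n" and "h g \<noteq> 0"
    and rows: "identity_rows_from n (Suc k) g" and "Suc k < n"
  shows "\<exists>u\<in>unip n. u * g \<in> mirabolic n \<and> h (u * g) \<noteq> 0 \<and> identity_rows_from n k (u * g) \<and>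
    (\<forall>i<n. \<forall>j<n. j \<le> i \<longrightarrow> (u * g) $$ (i, j) = g $$ (i, j))"
proof -
  have gc: "g \<in> carrier_mat n n" using g by (simp add: mirabolic_def GL_def)
  obtain u where u: "u \<in> unip n"
    and ug: "\<And>i j. i < n \<Longrightarrow> j < n \<Longrightarrow> (u * g) $$ (i, j) = (if i = k \<and> k < j then 0 else g $$ (i, j))"
    using clear_row_right_of_diagonal[OF gc rows] by blast
  have ugP: "u * g \<in> mirabolic n" using u g unip_subset_mirabolic mirabolic_mult by blast
  have "h (u * g) = psiN n \<psi> u * h g" using h u g by (simp add: unip_biequivariant_def)
  then have nonzero: "h (u * g) \<noteq> 0" using \<open>h g \<noteq> 0\<close> mult_eq_0_cancel unfolding psiN_def by metis
  have rows': "identity_rows_from n (Suc k) (u * g)"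
    using rows ug by (simp add: identity_rows_from_def)
  have rows_k: "identity_rows_from n k (u * g)"
    unfolding identity_rows_from_def
  proof (intro allI impI)
    fix i j assume "i < n" "j < n" "k \<le> i"
    show "(u * g) $$ (i, j) = (if i = j then 1 else 0)"
    proof (cases "i = k")
      case True
      show ?thesis
      proof (cases "k < j")
        case True
        then show ?thesis using ug \<open>i = k\<close> \<open>i < n\<close> \<open>j < n\<close> by simp
      next
        case False
        then show ?thesis
          using unip_biequivariant_row_lower_part[OF h ugP nonzero rows' \<open>Suc k < n\<close>] \<open>i = k\<close>
          by simp
      qed
    next
      case False
      then show ?thesis using rows' \<open>i < n\<close> \<open>j < n\<close> \<open>k \<le> i\<close> by (simp add: identity_rows_from_def)
    qed
  qed
  have "\<forall>i<n. \<forall>j<n. j \<le> i \<longrightarrow> (u * g) $$ (i, j) = g $$ (i, j)" using ug by auto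
  with u ugP nonzero rows_k show ?thesis by blast
qed

theorem unip_biequivariant_support:
  assumes h: "unip_biequivariant n h" and g: "g \<in> mirabolic n" and "h g \<noteq> 0"
  shows "g \<in> unip n"
proof -
  have "g \<in> unip n"
    if "g \<in> mirabolic n" "h g \<noteq> 0" "identity_rows_from n k g" "k \<le> n - 1" for k g
    using that
  proof (induction k arbitrary: g)
    case 0
    then show ?case by (auto simp: unip_iff identity_rows_from_def mirabolic_def GL_def)
  next
    case (Suc k)
    then have "Suc k < n" by linarith
    then obtain u where "u * g \<in> mirabolic n" "h (u * g) \<noteq> 0" "identity_rows_from n k (u * g)"
      and lower: "\<forall>i<n. \<forall>j<n. j \<le> i \<longrightarrow> (u * g) $$ (i, j) = g $$ (i, j)"
      using unip_biequivariant_reduce_row[OF h Suc.prems(1-3)] by blast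
    then have "u * g \<in> unip n" using Suc.IH Suc.prems(4) by simp
    then show ?case using lower Suc.prems(1) by (simp add: unip_iff mirabolic_def GL_def)
  qed
  moreover have "identity_rows_from n (n - 1) g"
    unfolding identity_rows_from_def
  proof (intro allI impI)
    fix i j assume "i < n" "j < n" "n - 1 \<le> i"
    then have "i = n - 1" by simp
    then show "g $$ (i, j) = (if i = j then 1 else 0)" using g \<open>j < n\<close> by (auto simp: mirabolic_def)
  qed
  ultimately show ?thesis using assms by blast
qed

end

section \<open>Averaging over a finite group\<close>

lemma (in group) twisted_average_eigenvector:
  fixes scale :: "'r::comm_ring_1 \<Rightarrow> 'v::ab_group_add \<Rightarrow> 'v"
  assumes "Modules.module scale"
    and hom: "\<And>g. g \<in> carrier G \<Longrightarrow> Modules.module_hom scale scale (\<rho> g)"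
    and action: "\<And>g h x. g \<in> carrier G \<Longrightarrow> h \<in> carrier G \<Longrightarrow> \<rho> (g \<otimes> h) x = \<rho> g (\<rho> h x)"
    and char: "\<And>g h. g \<in> carrier G \<Longrightarrow> h \<in> carrier G \<Longrightarrow> \<chi> (g \<otimes> h) = \<chi> g * \<chi> h"
    and u: "u \<in> carrier G"
  shows "\<rho> u (\<Sum>w\<in>carrier G. scale (\<chi> (inv w)) (\<rho> w v))
       = scale (\<chi> u) (\<Sum>w\<in>carrier G. scale (\<chi> (inv w)) (\<rho> w v))"
proof -
  have "\<rho> u (\<Sum>w\<in>carrier G. scale (\<chi> (inv w)) (\<rho> w v))
      = (\<Sum>w\<in>carrier G. scale (\<chi> (inv w)) (\<rho> (u \<otimes> w) v))"
    using u by (simp add: Modules.module_hom.sum[OF hom[OF u]] Modules.module_hom.scale[OF hom[OF u]] action)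
  also have "\<dots> = (\<Sum>w\<in>carrier G. scale (\<chi> u * \<chi> (inv (u \<otimes> w))) (\<rho> (u \<otimes> w) v))"
  proof (rule sum.cong[OF refl])
    fix w assume w: "w \<in> carrier G"
    have "inv w = inv (u \<otimes> w) \<otimes> u" using u w by (simp add: inv_mult_group m_assoc)
    then have "\<chi> (inv w) = \<chi> u * \<chi> (inv (u \<otimes> w))" using u w char by (simp add: mult.commute)
    then show "scale (\<chi> (inv w)) (\<rho> (u \<otimes> w) v) = scale (\<chi> u * \<chi> (inv (u \<otimes> w))) (\<rho> (u \<otimes> w) v)"
      by simp
  qed
  also have "\<dots> = (\<Sum>y\<in>carrier G. scale (\<chi> u * \<chi> (inv y)) (\<rho> y v))"
    by (rule sum.reindex_bij_witness[where i = "\<lambda>y. inv u \<otimes> y" and j = "\<lambda>w. u \<otimes> w"])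
      (use u in \<open>auto simp: m_assoc[symmetric]\<close>)
  also have "\<dots> = scale (\<chi> u) (\<Sum>y\<in>carrier G. scale (\<chi> (inv y)) (\<rho> y v))"
    by (simp add: Modules.module.scale_sum_right[OF assms(1)] Modules.module.scale_scale[OF assms(1)])
  finally show ?thesis .
qed

lemma (in group) convolution_with_character_delta:
  fixes \<chi> :: "'a \<Rightarrow> 'r::comm_ring_1"
  assumes "finite (carrier G)" and H: "subgroup H G"
    and char: "\<And>u w. u \<in> H \<Longrightarrow> w \<in> H \<Longrightarrow> \<chi> (u \<otimes> w) = \<chi> u * \<chi> w" and "\<chi> \<one> = 1"
    and f: "\<And>u g. u \<in> H \<Longrightarrow> g \<in> carrier G \<Longrightarrow> f (u \<otimes> g) = \<chi> u * f g"
    and h: "\<And>g. g \<in> carrier G \<Longrightarrow> h g = (if g \<in> H then \<chi> g * c else 0)"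
    and g: "g \<in> carrier G"
  shows "(\<Sum>z\<in>carrier G. f z * h (g \<otimes> inv z)) = of_nat (card H) * c * f g"
proof -
  have HG: "H \<subseteq> carrier G" using H by (rule subgroup.subset)
  have cancel: "g \<otimes> (inv g \<otimes> y) = y" if "y \<in> carrier G" for y
    using g that by (simp add: m_assoc[symmetric])
  have "(\<Sum>z\<in>carrier G. f z * h (g \<otimes> inv z)) = (\<Sum>y\<in>carrier G. f (inv y \<otimes> g) * h y)"
    by (rule sum.reindex_bij_witness[where i = "\<lambda>y. inv y \<otimes> g" and j = "\<lambda>z. g \<otimes> inv z"])
      (use g in \<open>auto simp: inv_mult_group m_assoc cancel\<close>)
  also have "\<dots> = (\<Sum>y\<in>H. f (inv y \<otimes> g) * h y)"
    using \<open>finite (carrier G)\<close> HG h by (intro sum.mono_neutral_right) auto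
  also have "\<dots> = (\<Sum>y\<in>H. c * f g)"
  proof (rule sum.cong[OF refl])
    fix y assume y: "y \<in> H"
    have "inv y \<in> H" using H y by (rule subgroup.m_inv_closed)
    then have "\<chi> (inv y) * \<chi> y = 1"
      using char[of "inv y" y] y HG \<open>\<chi> \<one> = 1\<close> by auto
    then show "f (inv y \<otimes> g) * h y = c * f g"
      using f[OF \<open>inv y \<in> H\<close> g] h y HG by (auto simp: algebra_simps)
  qed
  finally show ?thesis by simp
qed

section \<open>Whittaker functions on the mirabolic group\<close>

locale whittaker_datum = nondegenerate_additive_char \<psi>
  for \<psi> :: "'f::{finite,field} \<Rightarrow> 'r::comm_ring_1" +
  fixes n :: nat and scale :: "'r \<Rightarrow> 'v::ab_group_add \<Rightarrow> 'v"
    and \<rho> :: "'f mat \<Rightarrow> 'v \<Rightarrow> 'v" and lam :: "'v \<Rightarrow> 'r"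
  assumes rep: "is_rep n scale \<rho>"
    and whittaker: "whittaker_type n scale \<rho> \<psi>"
    and generator: "dual_generator n scale \<rho> \<psi> lam"
begin

lemma module_scale: "Modules.module scale"
  using rep by (simp add: is_rep_def)

lemma rho_hom: "g \<in> GL n \<Longrightarrow> Modules.module_hom scale scale (\<rho> g)"
  using rep by (simp add: is_rep_def)

lemma rho_mult: "g \<in> GL n \<Longrightarrow> h \<in> GL n \<Longrightarrow> \<rho> (g * h) x = \<rho> g (\<rho> h x)"
  using rep by (simp add: is_rep_def)

lemma lam_hom: "Modules.module_hom scale (*) lam"
  using generator by (simp add: dual_generator_def lin_form_def)

lemma lam_rho_unip: "u \<in> unip n \<Longrightarrow> lam (\<rho> u x) = psiN n \<psi> u * lam x"
proof -
  assume u: "u \<in> unip n"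
  have "\<rho> u x - scale (psiN n \<psi> u) x \<in> coinv_kernel n scale \<rho> \<psi>"
    unfolding coinv_kernel_def by (rule Modules.module.span_base[OF module_scale]) (use u in blast)
  then have "lam (\<rho> u x - scale (psiN n \<psi> u) x) = 0"
    using generator by (simp add: dual_generator_def)
  then show ?thesis
    by (simp add: Modules.module_hom.diff[OF lam_hom] Modules.module_hom.scale[OF lam_hom])
qed

lemma ex_lam_eq_1: "\<exists>v. lam v = 1"
proof -
  obtain f where "lin_form scale f" "surj f" "\<And>v. f v = 0 \<longleftrightarrow> v \<in> coinv_kernel n scale \<rho> \<psi>"
    using whittaker by (auto simp: whittaker_type_def)
  moreover obtain w where "f w = 1" using \<open>surj f\<close> by (metis surjD)
  ultimately obtain r where "\<And>v. f v = r * lam v"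
    using generator by (auto simp: dual_generator_def)
  then have "lam (scale r w) = 1"
    using \<open>f w = 1\<close> by (simp add: Modules.module_hom.scale[OF lam_hom])
  then show ?thesis ..
qed

lemma ex_unip_eigenvector:
  "\<exists>v. lam v = of_nat (card (unip n :: 'f mat set)) \<and> (\<forall>u\<in>unip n. \<rho> u v = scale (psiN n \<psi> u) v)"
proof -
  let ?N = "(mirabolic_group n :: 'f mat monoid)\<lparr>carrier := unip n\<rparr>"
  interpret N: group ?N
    by (rule group.subgroup_imp_group[OF group_mirabolic_group subgroup_unip])
  have NG: "u \<in> unip n \<Longrightarrow> u \<in> GL n" for u
    using unip_subset_mirabolic mirabolic_GL by blast
  obtain v0 where "lam v0 = 1" using ex_lam_eq_1 by blast
  define v where "v = (\<Sum>w\<in>unip n. scale (psiN n \<psi> (inv\<^bsub>?N\<^esub> w)) (\<rho> w v0))"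
  have eigen: "\<rho> u v = scale (psiN n \<psi> u) v" if "u \<in> unip n" for u
    using N.twisted_average_eigenvector[OF module_scale, of \<rho> "psiN n \<psi>" u v0] that
    by (simp add: v_def rho_hom NG rho_mult psiN_mult)
  have "lam v = (\<Sum>w\<in>unip n. psiN n \<psi> (inv\<^bsub>?N\<^esub> w) * psiN n \<psi> w)"
    using \<open>lam v0 = 1\<close> by (simp add: v_def Modules.module_hom.sum[OF lam_hom]
        Modules.module_hom.scale[OF lam_hom] lam_rho_unip)
  also have "\<dots> = (\<Sum>w\<in>(unip n :: 'f mat set). 1)"
  proof (rule sum.cong[OF refl])
    fix w :: "'f mat" assume w: "w \<in> unip n"
    then have "inv\<^bsub>?N\<^esub> w \<in> unip n" "inv\<^bsub>?N\<^esub> w * w = 1\<^sub>m n"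
      using N.inv_closed[of w] N.l_inv[of w] by simp_all
    then show "psiN n \<psi> (inv\<^bsub>?N\<^esub> w) * psiN n \<psi> w = 1"
      using w by (simp flip: psiN_mult add: psiN_one)
  qed
  finally show ?thesis using eigen by auto
qed

lemma eigen_whittaker_function:
  obtains v where "\<And>g. g \<in> mirabolic n \<Longrightarrow>
    lam (\<rho> g v) = (if g \<in> unip n then psiN n \<psi> g * of_nat (card (unip n :: 'f mat set)) else 0)"
proof -
  obtain v where v1: "lam v = of_nat (card (unip n :: 'f mat set))"
    and eigen: "\<And>u. u \<in> unip n \<Longrightarrow> \<rho> u v = scale (psiN n \<psi> u) v"
    using ex_unip_eigenvector by blast
  define h where "h g = lam (\<rho> g v)" for g
  have left: "h (u * g) = psiN n \<psi> u * h g" and right: "h (g * u) = h g * psiN n \<psi> u"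
    if "u \<in> unip n" "g \<in> mirabolic n" for u g
  proof -
    have "u \<in> GL n" "g \<in> GL n" using that unip_subset_mirabolic mirabolic_GL by auto
    then show "h (u * g) = psiN n \<psi> u * h g" "h (g * u) = h g * psiN n \<psi> u"
      using that by (simp_all add: h_def rho_mult lam_rho_unip eigen mult.commute
          Modules.module_hom.scale[OF lam_hom] Modules.module_hom.scale[OF rho_hom])
  qed
  then have "unip_biequivariant n h" by (simp add: unip_biequivariant_def)
  have "h u = psiN n \<psi> u * of_nat (card (unip n :: 'f mat set))" if "u \<in> unip n" for u
  proof -
    have "h u = h (u * 1\<^sub>m n)" using unip_carrier[OF that] by simp
    also have "\<dots> = psiN n \<psi> u * h (1\<^sub>m n)"
      using left[OF that one_mirabolic] by simp
    finally show ?thesis using v1 rep by (simp add: h_def is_rep_def)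
  qed
  then have "h g = (if g \<in> unip n then psiN n \<psi> g * of_nat (card (unip n :: 'f mat set)) else 0)"
    if "g \<in> mirabolic n" for g
    using unip_biequivariant_support[OF \<open>unip_biequivariant n h\<close> that] by (cases "g \<in> unip n") auto
  then show thesis using that[of v] unfolding h_def by blast
qed

theorem restriction_to_mirabolic_surjective:
  assumes "\<exists>s. of_nat (card (unip n :: 'f mat set)) * s = (1::'r)"
  shows "\<forall>f\<in>ind_P n \<psi>. \<exists>v. \<forall>g\<in>mirabolic n. whittaker_fun \<rho> lam v g = f g"
proof
  fix f assume f: "f \<in> ind_P n \<psi>"
  let ?P = "mirabolic_group n :: 'f mat monoid"
  interpret P: group ?P by (rule group_mirabolic_group)
  let ?q = "of_nat (card (unip n :: 'f mat set)) :: 'r"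
  obtain s where s: "?q * s = 1" using assms by blast
  obtain v1 where v1: "\<And>g. g \<in> mirabolic n \<Longrightarrow>
      lam (\<rho> g v1) = (if g \<in> unip n then psiN n \<psi> g * ?q else 0)"
    using eigen_whittaker_function by blast
  define v where "v = scale (s * s) (\<Sum>z\<in>mirabolic n. scale (f z) (\<rho> (inv\<^bsub>?P\<^esub> z) v1))"
  have "whittaker_fun \<rho> lam v g = f g" if g: "g \<in> mirabolic n" for g
  proof -
    have "whittaker_fun \<rho> lam v g
        = s * s * (\<Sum>z\<in>mirabolic n. f z * lam (\<rho> g (\<rho> (inv\<^bsub>?P\<^esub> z) v1)))"
      using g by (simp add: v_def whittaker_fun_def Modules.module_hom.scale[OF lam_hom]
          Modules.module_hom.sum[OF lam_hom] Modules.module_hom.scale[OF rho_hom]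
          Modules.module_hom.sum[OF rho_hom] mirabolic_GL)
    also have "\<dots> = s * s * (\<Sum>z\<in>mirabolic n. f z * lam (\<rho> (g * inv\<^bsub>?P\<^esub> z) v1))"
      using g P.inv_closed by (simp add: rho_mult mirabolic_GL cong: sum.cong)
    also have "(\<Sum>z\<in>mirabolic n. f z * lam (\<rho> (g * inv\<^bsub>?P\<^esub> z) v1)) = ?q * ?q * f g"
      by (rule P.convolution_with_character_delta[where \<chi> = "psiN n \<psi>" and f = f
          and h = "\<lambda>x. lam (\<rho> x v1)" and c = ?q, OF _ subgroup_unip, simplified])
        (use finite_mirabolic f g v1 in \<open>auto simp: psiN_mult psiN_one ind_P_def\<close>)
    also have "s * s * (?q * ?q * f g) = (?q * s) * (?q * s) * f g"
      by (simp only: ac_simps)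
    finally show ?thesis using s by simp
  qed
  then show "\<exists>v. \<forall>g\<in>mirabolic n. whittaker_fun \<rho> lam v g = f g" by blast
qed

end

theorem lemma2p14:
  fixes p :: nat and n :: nat
    and \<zeta> :: "'r::comm_ring_1" and c :: "'f::{finite,field} \<Rightarrow> nat"
    and \<psi>R :: "'f \<Rightarrow> 'r"
    and scale :: "'r \<Rightarrow> 'v::ab_group_add \<Rightarrow> 'v"
    and \<rho> :: "'f mat \<Rightarrow> 'v \<Rightarrow> 'v"
    and lam :: "'v \<Rightarrow> 'r"
  assumes p_prime: "prime p"
    and char_p: "of_nat p = (0::'f)"
    and R_nontriv: "(0::'r) \<noteq> 1"
    and R_noeth: "noetherian_ring TYPE('r)"
    and p_unit: "\<exists>t::'r. of_nat p * t = 1"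
    and zeta_cyclo: "(\<Sum>i<p. \<zeta> ^ i) = 0"
    and c_add: "\<And>x y. [c (x + y) = c x + c y] (mod p)"
    and c_nontriv: "\<exists>x. \<not> p dvd c x"
    and psiR_def: "\<And>x. \<psi>R x = \<zeta> ^ c x"
    and rep: "is_rep n scale \<rho>"
    and wt: "whittaker_type n scale \<rho> \<psi>R"
    and gen: "dual_generator n scale \<rho> \<psi>R lam"
  shows "\<forall>f\<in>ind_P n \<psi>R. \<exists>v. \<forall>g\<in>mirabolic n. whittaker_fun \<rho> lam v g = f g"
proof -
  have "\<psi>R = (\<lambda>x. \<zeta> ^ c x)" using psiR_def by blast
  then interpret nondegenerate_additive_char \<psi>R
    using nondegenerate_additive_char_power[OF p_prime p_unit zeta_cyclo c_add c_nontriv] by simp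
  interpret whittaker_datum \<psi>R n scale \<rho> lam
    using rep wt gen by unfold_locales
  show ?thesis
    using card_unip_invertible[OF p_prime char_p p_unit] by (rule restriction_to_mirabolic_surjective)
qed

end
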